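(* Let $\mathfrak f=f_0x^2+f_1x+f_2\in\mathbb R[x,y]$ with $f_i\in\mathbb R[y]$ and $\deg(f_i)\le i$. Then there exists an algorithm which computes $\mathcal V_{\mathrm{aff}}(\mathfrak f)$.
   Context: For a set $\mathcal I$ of polynomials in $\mathbb R[x_1,\dots,x_d]$, $\mathcal V(\mathcal I)$ is its common real zero set, and $\mathcal V_{\mathrm{aff}}(\mathcal I)$ (the isolated affine subspaces) is the set of all affine subspaces $\mathcal C\subset\mathcal V(\mathcal I)$ which are not properly contained in a connected component of $\mathcal V(\mathcal I)$, i.e., the connected components of $\mathcal V(\mathcal I)$ that are affine subspaces. Algorithms operate exactly on real numbers with real root finding of univariate polynomials as a primitive. *)

theory Defs
  imports "HOL-Analysis.Analysis" "HOL-Computational_Algebra.Polynomial"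
begin

definition Vaff :: "'a::euclidean_space set \<Rightarrow> 'a set set" where
  "Vaff V = {C. affine C \<and> C \<noteq> {} \<and> C \<subseteq> V \<and> \<not> (\<exists>K \<in> components V. C \<subset> K)}"

definition quad_eval :: "real poly \<Rightarrow> real poly \<Rightarrow> real poly \<Rightarrow> real \<times> real \<Rightarrow> real" where
  "quad_eval f0 f1 f2 = (\<lambda>(x, y). poly f0 y * x ^ 2 + poly f1 y * x + poly f2 y)"

definition zero_set :: "real poly \<Rightarrow> real poly \<Rightarrow> real poly \<Rightarrow> (real \<times> real) set" where
  "zero_set f0 f1 f2 = {p. quad_eval f0 f1 f2 p = 0}"

section \<open>Model of computation: algebraic computation trees over the reals
  with exact arithmetic, exact comparisons and real root finding of
  univariate polynomials as a primitive\<close>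

text \<open>Registers form a list of reals; every instruction appends its result.
  An alg_output is a finite list of affine subspaces of R^2, each given by the
  registers holding a base point and the registers holding spanning
  direction vectors.\<close>

datatype prog =
    Const real prog
  | Add nat nat prog
  | Mul nat nat prog
  | Neg nat prog
  | Inv nat prog
  | IfPos nat prog prog
  | IfZero nat prog prog
  | Roots "nat list" prog              \<comment> \<open>for p = sum r_(is!k) X^k (abort if p = 0): append the
                                           number of distinct real roots of p, then those roots in
                                           increasing order\<close>
  | Ret "((nat \<times> nat) \<times> (nat \<times> nat) list) list"

definition reg :: "real list \<Rightarrow> nat \<Rightarrow> real" where
  "reg s i = (if i < length s then s ! i else 0)"

definition real_roots_sorted :: "real poly \<Rightarrow> real list" where
  "real_roots_sorted p = sorted_list_of_set {x. poly p x = 0}"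

type_synonym alg_output = "((real \<times> real) \<times> (real \<times> real) list) list"

primrec exec :: "prog \<Rightarrow> real list \<Rightarrow> alg_output option" where
  "exec (Const c P) s = exec P (s @ [c])"
| "exec (Add i j P) s = exec P (s @ [reg s i + reg s j])"
| "exec (Mul i j P) s = exec P (s @ [reg s i * reg s j])"
| "exec (Neg i P) s = exec P (s @ [- reg s i])"
| "exec (Inv i P) s = (if reg s i = 0 then None else exec P (s @ [1 / reg s i]))"
| "exec (IfPos i P Q) s = (if reg s i > 0 then exec P s else exec Q s)"
| "exec (IfZero i P Q) s = (if reg s i = 0 then exec P s else exec Q s)"
| "exec (Roots is P) s =
     (let p = Poly (map (reg s) is) in
      if p = 0 then None
      else exec P (s @ [real (length (real_roots_sorted p))] @ real_roots_sorted p))"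
| "exec (Ret out) s =
     Some (map (\<lambda>((a, b), ds). ((reg s a, reg s b), map (\<lambda>(c, d). (reg s c, reg s d)) ds)) out)"

definition out_set :: "alg_output \<Rightarrow> (real \<times> real) set set" where
  "out_set out = (\<lambda>(p, ds). (\<lambda>v. p + v) ` span (set ds)) ` set out"

definition input_regs :: "real poly \<Rightarrow> real poly \<Rightarrow> real poly \<Rightarrow> real list" where
  "input_regs f0 f1 f2 =
     [coeff f0 0, coeff f1 0, coeff f1 1, coeff f2 0, coeff f2 1, coeff f2 2]"

end

theory Submission
  imports Defs
begin

text \<open>Completing the square in x (if a \<noteq> 0), possibly after exchanging x and y (if c2 \<noteq> 0)
  or after a shear (if b1 \<noteq> 0), maps the conic by an affine bijection onto the normal form
  u^2 = d2 y^2 + d1 y + d0; otherwise the equation is linear. Affine bijections are homeomorphisms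
  preserving affine subspaces, so they transport isolated affine subspaces. On the normal form,
  an isolated affine subspace with two points is a line u = \<alpha> y + \<beta>. If \<alpha> \<noteq> 0, its mirror image
  u = - \<alpha> y - \<beta> also lies on the conic and meets it, so by maximality the subspace contains the
  mirror image and hence the midpoints (0, y), which are not on the conic where \<alpha> y + \<beta> \<noteq> 0.
  A single point is not isolated either, since it lies on an arc of the conic unless d2 < 0 and
  the right-hand side has a double root. So the answer is a line, two parallel lines, a point,
  the plane or nothing, decided by sign tests on polynomials in the coefficients, with a square
  root for the two parallel lines.\<close>

section \<open>Isolated affine subspaces\<close>

lemma mem_Vaff_iff:
  "C \<in> Vaff V \<longleftrightarrow> affine C \<and> C \<noteq> {} \<and> C \<subseteq> V \<and>
     (\<forall>S. connected S \<and> C \<subseteq> S \<and> S \<subseteq> V \<longrightarrow> S = C)"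
proof
  assume "C \<in> Vaff V"
  then have C: "affine C" "C \<noteq> {}" "C \<subseteq> V" and no_comp: "\<not> (\<exists>K \<in> components V. C \<subset> K)"
    by (auto simp: Vaff_def)
  have "S = C" if S: "connected S" "C \<subseteq> S" "S \<subseteq> V" for S
  proof -
    obtain p where p: "p \<in> C" using C by auto
    let ?K = "connected_component_set V p"
    have K: "?K \<in> components V" using p C by (auto intro: componentsI)
    have "S \<subseteq> ?K" using S p by (intro connected_component_maximal) auto
    with S have "C \<subseteq> ?K" by blast
    with no_comp K have "C = ?K" by (meson psubsetI)
    with S \<open>S \<subseteq> ?K\<close> show ?thesis by blast
  qed
  with C show "affine C \<and> C \<noteq> {} \<and> C \<subseteq> V \<and> (\<forall>S. connected S \<and> C \<subseteq> S \<and> S \<subseteq> V \<longrightarrow> S = C)"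
    by blast
next
  assume C: "affine C \<and> C \<noteq> {} \<and> C \<subseteq> V \<and> (\<forall>S. connected S \<and> C \<subseteq> S \<and> S \<subseteq> V \<longrightarrow> S = C)"
  have "\<not> C \<subset> K" if "K \<in> components V" for K
    using C in_components_connected[OF that] in_components_subset[OF that] by auto
  with C show "C \<in> Vaff V"
    unfolding Vaff_def by blast
qed

lemma affine_imp_connected:
  fixes S :: "'a::real_normed_vector set"
  shows "affine S \<Longrightarrow> connected S"
  by (simp add: affine_imp_convex convex_connected)

lemma Vaff_empty [simp]: "Vaff {} = {}"
  by (auto simp: Vaff_def)

lemma Vaff_affine:
  assumes "affine V" "V \<noteq> {}"
  shows "Vaff V = {V}"
proof -
  have "C \<in> Vaff V \<longleftrightarrow> C = V" for C
  proof
    assume "C \<in> Vaff V"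
    then have "C \<subseteq> V" "\<And>S. connected S \<Longrightarrow> C \<subseteq> S \<Longrightarrow> S \<subseteq> V \<Longrightarrow> S = C"
      by (simp_all add: mem_Vaff_iff)
    then show "C = V" using affine_imp_connected[OF assms(1)] by blast
  next
    assume "C = V"
    then show "C \<in> Vaff V" using assms unfolding mem_Vaff_iff by blast
  qed
  then show ?thesis by blast
qed

lemma Vaff_Un_disjoint_affine:
  fixes A B :: "'a::euclidean_space set"
  assumes A: "affine A" "A \<noteq> {}" and B: "affine B" "B \<noteq> {}" and disj: "A \<inter> B = {}"
  shows "Vaff (A \<union> B) = {A, B}"
proof -
  have split: "S \<subseteq> A \<or> S \<subseteq> B" if "connected S" "S \<subseteq> A \<union> B" for S
  proof -
    have "A \<inter> S = {} \<or> B \<inter> S = {}"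
      by (rule connected_closedD[OF that(1) _ that(2)]) (use A B disj affine_closed in auto)
    with that(2) show ?thesis by blast
  qed
  have maxA: "S = A" if "connected S" "A \<subseteq> S" "S \<subseteq> A \<union> B" for S
    using split[OF that(1,3)] that(2) A(2) disj by blast
  have maxB: "S = B" if "connected S" "B \<subseteq> S" "S \<subseteq> A \<union> B" for S
    using split[OF that(1,3)] that(2) B(2) disj by blast
  have "C \<in> Vaff (A \<union> B) \<longleftrightarrow> C = A \<or> C = B" for C
  proof
    assume "C \<in> Vaff (A \<union> B)"
    then have C: "affine C" "C \<subseteq> A \<union> B"
      and max: "\<And>S. connected S \<Longrightarrow> C \<subseteq> S \<Longrightarrow> S \<subseteq> A \<union> B \<Longrightarrow> S = C"
      by (simp_all add: mem_Vaff_iff)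
    from split[OF affine_imp_connected[OF C(1)] C(2)] show "C = A \<or> C = B"
      using max[OF affine_imp_connected[OF A(1)]] max[OF affine_imp_connected[OF B(1)]] by blast
  next
    assume "C = A \<or> C = B"
    then show "C \<in> Vaff (A \<union> B)"
      using A B maxA maxB unfolding mem_Vaff_iff by blast
  qed
  then show ?thesis by blast
qed

lemma affine_linear_translate_image:
  assumes "linear l" "affine C"
  shows "affine ((\<lambda>x. l x + c) ` C)"
proof -
  have "affine (l ` C)"
    unfolding affine_def
  proof (intro ballI allI impI)
    fix x y u v assume "x \<in> l ` C" "y \<in> l ` C" "u + v = (1::real)"
    then obtain p q where pq: "p \<in> C" "q \<in> C" "x = l p" "y = l q" by auto
    then have "u *\<^sub>R p + v *\<^sub>R q \<in> C"
      using assms(2) \<open>u + v = 1\<close> unfolding affine_def by blast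
    moreover have "u *\<^sub>R x + v *\<^sub>R y = l (u *\<^sub>R p + v *\<^sub>R q)"
      using pq assms(1) by (simp add: linear_add linear_scale)
    ultimately show "u *\<^sub>R x + v *\<^sub>R y \<in> l ` C" by blast
  qed
  moreover have "(\<lambda>x. l x + c) ` C = (+) c ` l ` C"
    by (auto simp: image_image add.commute)
  ultimately show ?thesis by (simp add: affine_translation[symmetric])
qed

lemma image_mem_Vaff_affine_bijection:
  fixes l :: "'a::euclidean_space \<Rightarrow> 'a"
  assumes l: "linear l" "inj l" and C: "C \<in> Vaff V"
  shows "(\<lambda>x. l x + c) ` C \<in> Vaff ((\<lambda>x. l x + c) ` V)"
proof -
  obtain l' where l': "linear l'" "\<And>x. l' (l x) = x" "\<And>x. l (l' x) = x"
    using linear_injective_isomorphism[OF l refl] by blast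
  let ?g = "\<lambda>x. l x + c" and ?h = "\<lambda>y. l' (y - c)"
  have hg: "?h (?g x) = x" for x by (simp add: l')
  have gh: "?g (?h y) = y" for y by (simp add: l')
  have "continuous_on UNIV (\<lambda>y. y - c)"
    by (intro continuous_intros)
  then have cont_h: "continuous_on UNIV ?h"
    using l'(1) by (rule linear_continuous_on_compose)
  from C have C': "affine C" "C \<noteq> {}" "C \<subseteq> V"
    and max: "\<And>S. connected S \<Longrightarrow> C \<subseteq> S \<Longrightarrow> S \<subseteq> V \<Longrightarrow> S = C"
    by (simp_all add: mem_Vaff_iff)
  have "S = ?g ` C" if S: "connected S" "?g ` C \<subseteq> S" "S \<subseteq> ?g ` V" for S
  proof -
    have "connected (?h ` S)"
      by (rule connected_continuous_image[OF continuous_on_subset[OF cont_h] S(1)]) simp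
    moreover have "C \<subseteq> ?h ` S"
    proof
      fix x assume "x \<in> C"
      with S(2) have "?g x \<in> S" by blast
      then show "x \<in> ?h ` S" by (rule image_eqI[rotated]) (simp only: hg)
    qed
    moreover have "?h ` S \<subseteq> V"
      using S(3) hg by auto
    ultimately have "?h ` S = C" by (rule max)
    then have "?g ` C = ?g ` ?h ` S" by simp
    also have "\<dots> = S" by (simp add: image_image gh)
    finally show ?thesis by simp
  qed
  then show ?thesis
    using C' affine_linear_translate_image[OF l(1) C'(1)] unfolding mem_Vaff_iff by blast
qed

lemma Vaff_affine_bijection_image:
  fixes l :: "'a::euclidean_space \<Rightarrow> 'a"
  assumes l: "linear l" "inj l"
  shows "Vaff ((\<lambda>x. l x + c) ` V) = (`) (\<lambda>x. l x + c) ` Vaff V"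
proof
  show "(`) (\<lambda>x. l x + c) ` Vaff V \<subseteq> Vaff ((\<lambda>x. l x + c) ` V)"
    using image_mem_Vaff_affine_bijection[OF l] by blast
next
  obtain l' where l': "linear l'" "\<And>x. l' (l x) = x" "\<And>x. l (l' x) = x"
    using linear_injective_isomorphism[OF l refl] by blast
  let ?g = "\<lambda>x. l x + c" and ?h = "\<lambda>y. l' y + - l' c"
  have "?h (?g x) = x" for x
    by (simp add: linear_add[OF l'(1)] l'(2))
  then have hg: "?h ` ?g ` S = S" for S
    by (simp add: image_image)
  have "?g (?h y) = y" for y
    by (simp add: linear_diff[OF l(1)] l'(3))
  then have gh: "?g ` ?h ` S = S" for S
    by (simp add: image_image)
  have "inj l'" using l'(3) by (metis injI)
  show "Vaff (?g ` V) \<subseteq> (`) ?g ` Vaff V"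
  proof
    fix C assume "C \<in> Vaff (?g ` V)"
    then have "?h ` C \<in> Vaff (?h ` ?g ` V)"
      by (rule image_mem_Vaff_affine_bijection[OF l'(1) \<open>inj l'\<close>])
    then have "?h ` C \<in> Vaff V" by (simp only: hg)
    moreover have "C = ?g ` ?h ` C" by (simp only: gh)
    ultimately show "C \<in> (`) ?g ` Vaff V" by blast
  qed
qed

section \<open>Flats\<close>

definition flat :: "'a::real_vector \<Rightarrow> 'a list \<Rightarrow> 'a set" where
  "flat p ds = (\<lambda>v. p + v) ` span (set ds)"

lemma out_set_Nil [simp]: "out_set [] = {}"
  by (simp add: out_set_def)

lemma out_set_Cons [simp]: "out_set ((p, ds) # out) = insert (flat p ds) (out_set out)"
  by (simp add: out_set_def flat_def)

lemma affine_flat: "affine (flat p ds)"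
  unfolding flat_def
  using affine_translation[of "span (set ds)" p] subspace_imp_affine[OF subspace_span] by auto

lemma flat_nonempty: "flat p ds \<noteq> {}"
  unfolding flat_def using span_zero by blast

lemma flat_Nil [simp]: "flat p [] = {p}"
  by (simp add: flat_def)

lemma flat_single: "flat p [d] = range (\<lambda>t. p + t *\<^sub>R d)"
  by (auto simp: flat_def span_singleton)

lemma flat_vertical: "flat (r, 0) [(0, 1)] = {(u, y::real). u = (r::real)}"
proof -
  have "(u, y) \<in> flat (r, 0) [(0, 1)] \<longleftrightarrow> u = r" for u y :: real
    by (auto simp: flat_single image_iff real_scaleR_def)
  then show ?thesis by auto
qed

lemma Vaff_flat: "Vaff (flat p ds) = {flat p ds}"
  by (simp add: Vaff_affine affine_flat flat_nonempty)

lemma affine_image_flat: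
  assumes "linear l"
  shows "(\<lambda>x. l x + c) ` flat p ds = flat (l p + c) (map l ds)"
proof -
  have "(\<lambda>x. l x + c) ` flat p ds = (\<lambda>v. (l p + c) + v) ` l ` span (set ds)"
    unfolding flat_def image_image by (simp add: linear_add[OF assms] algebra_simps)
  also have "l ` span (set ds) = span (set (map l ds))"
    by (simp add: linear_span_image[OF assms])
  finally show ?thesis by (simp add: flat_def)
qed

definition map_out :: "(real \<times> real \<Rightarrow> real \<times> real) \<Rightarrow> (real \<times> real \<Rightarrow> real \<times> real) \<Rightarrow>
    alg_output \<Rightarrow> alg_output" where
  "map_out g l out = map (\<lambda>(p, ds). (g p, map l ds)) out"

lemma out_set_map_out:
  assumes "linear l" "\<And>x. g x = l x + c"
  shows "out_set (map_out g l out) = (`) g ` out_set out"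
proof -
  have g: "g = (\<lambda>x. l x + c)" using assms(2) by blast
  show ?thesis
  proof (induction out)
    case (Cons e out)
    then show ?case
      by (cases e) (simp add: map_out_def g affine_image_flat[OF assms(1)])
  qed (simp add: map_out_def)
qed

lemma Vaff_affine_bijection_image_out:
  assumes "linear l" "inj l" "\<And>x. g x = l x + c" and "Vaff V = out_set out"
  shows "Vaff (g ` V) = out_set (map_out g l out)"
proof -
  have g: "g = (\<lambda>x. l x + c)" using assms(3) by blast
  show ?thesis
    using Vaff_affine_bijection_image[OF assms(1,2)] out_set_map_out[OF assms(1,3)] assms(4)
    by (simp add: g)
qed

section \<open>The normal form u^2 = d2 y^2 + d1 y + d0\<close>

definition normal_conic :: "real \<Rightarrow> real \<Rightarrow> real \<Rightarrow> (real \<times> real) set" where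
  "normal_conic d2 d1 d0 = {(u, y). u^2 = d2 * y^2 + d1 * y + d0}"

lemma mem_normal_conic [simp]: "(u, y) \<in> normal_conic d2 d1 d0 \<longleftrightarrow> u^2 = d2 * y^2 + d1 * y + d0"
  by (simp add: normal_conic_def)

lemma affine_subset_normal_conic_contains_graph:
  assumes C: "affine C" "C \<subseteq> normal_conic d2 d1 d0" and pq: "p \<in> C" "q \<in> C" "p \<noteq> q"
  shows "\<exists>\<alpha> \<beta>. \<forall>y. (\<alpha> * y + \<beta>, y) \<in> C"
proof -
  obtain u1 y1 u2 y2 where p: "p = (u1, y1)" and q: "q = (u2, y2)" by (cases p, cases q)
  have on_line: "(u1 + t * (u2 - u1), y1 + t * (y2 - y1)) \<in> C" for t
  proof -
    have "(1 - t) *\<^sub>R p + t *\<^sub>R q \<in> C"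
      using C(1) pq(1,2) unfolding affine_def by simp
    moreover have "(1 - t) *\<^sub>R p + t *\<^sub>R q = (u1 + t * (u2 - u1), y1 + t * (y2 - y1))"
      by (simp add: p q algebra_simps)
    ultimately show ?thesis by simp
  qed
  have "y1 \<noteq> y2"
  proof
    assume "y1 = y2"
    then have sq: "(u1 + t * (u2 - u1))^2 = d2 * y1^2 + d1 * y1 + d0" for t
      using on_line[of t] C(2) by auto
    \<comment> \<open>a quadratic in t that is constant has vanishing leading coefficient\<close>
    have "(u1 + (u2 - u1))^2 + (u1 - (u2 - u1))^2 = 2 * u1^2 + 2 * (u2 - u1)^2"
      by (simp add: power2_eq_square algebra_simps)
    with sq[of 1] sq[of "-1"] sq[of 0] have "(u2 - u1)^2 = 0" by simp
    with \<open>y1 = y2\<close> pq(3) show False by (simp add: p q)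
  qed
  define \<alpha> where "\<alpha> = (u2 - u1) / (y2 - y1)"
  define \<beta> where "\<beta> = u1 - \<alpha> * y1"
  have "(\<alpha> * y + \<beta>, y) \<in> C" for y
  proof -
    let ?t = "(y - y1) / (y2 - y1)"
    have "u1 + ?t * (u2 - u1) = u1 + \<alpha> * (y - y1)"
      by (simp add: \<alpha>_def)
    also have "\<dots> = \<alpha> * y + \<beta>"
      by (simp add: \<beta>_def algebra_simps)
    finally have "u1 + ?t * (u2 - u1) = \<alpha> * y + \<beta>" .
    moreover have "y1 + ?t * (y2 - y1) = y"
      using \<open>y1 \<noteq> y2\<close> by simp
    ultimately show ?thesis using on_line[of ?t] by simp
  qed
  then show ?thesis by blast
qed

lemma square_linear_eq_quadratic_coeffs:
  fixes \<alpha> \<beta> d2 d1 d0 :: real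
  assumes "\<And>y. (\<alpha> * y + \<beta>)^2 = d2 * y^2 + d1 * y + d0"
  shows "d2 = \<alpha>^2 \<and> d1 = 2 * \<alpha> * \<beta> \<and> d0 = \<beta>^2"
  using assms[of 0] assms[of 1] assms[of "-1"] by (simp add: power2_eq_square algebra_simps)

lemma graph_in_Vaff_normal_conic_constant:
  assumes C: "C \<in> Vaff (normal_conic d2 d1 d0)" and graph: "\<And>y. (\<alpha> * y + \<beta>, y) \<in> C"
  shows "\<alpha> = 0"
proof (rule ccontr)
  assume "\<alpha> \<noteq> 0"
  from C have C': "affine C" "C \<subseteq> normal_conic d2 d1 d0"
    and max: "\<And>S. connected S \<Longrightarrow> C \<subseteq> S \<Longrightarrow> S \<subseteq> normal_conic d2 d1 d0 \<Longrightarrow> S = C"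
    by (simp_all add: mem_Vaff_iff)
  have on_conic: "(\<alpha> * y + \<beta>)^2 = d2 * y^2 + d1 * y + d0" for y
    using graph[of y] C'(2) by auto
  \<comment> \<open>the mirror image of the line also lies on the conic and crosses it at u = 0\<close>
  let ?L = "range (\<lambda>y. (- (\<alpha> * y + \<beta>), y))"
  have "connected ?L"
    by (intro connected_continuous_image continuous_intros connected_UNIV)
  moreover have "?L \<subseteq> normal_conic d2 d1 d0"
  proof clarify
    fix y
    have "(- (\<alpha> * y + \<beta>))^2 = d2 * y^2 + d1 * y + d0"
      unfolding power2_minus by (rule on_conic)
    then show "(- (\<alpha> * y + \<beta>), y) \<in> normal_conic d2 d1 d0" by simp
  qed
  moreover have "(0, - \<beta> / \<alpha>) \<in> C \<inter> ?L"
    using graph[of "- \<beta> / \<alpha>"] \<open>\<alpha> \<noteq> 0\<close> by (auto simp: image_iff intro!: exI[of _ "- \<beta> / \<alpha>"])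
  ultimately have "C \<union> ?L = C"
    using connected_Un[OF affine_imp_connected[OF C'(1)]] C'(2) by (intro max) auto
  then have "?L \<subseteq> C" by blast
  define y1 where "y1 = (1 - \<beta>) / \<alpha>"
  have "\<alpha> * y1 + \<beta> = 1" using \<open>\<alpha> \<noteq> 0\<close> by (simp add: y1_def)
  moreover have "(- (\<alpha> * y1 + \<beta>), y1) \<in> C"
    using \<open>?L \<subseteq> C\<close> by blast
  ultimately have "(1, y1) \<in> C" "(-1, y1) \<in> C"
    using graph[of y1] by simp_all
  moreover have "(1/2::real) + 1/2 = 1" by simp
  ultimately have "(1/2) *\<^sub>R (1, y1) + (1/2) *\<^sub>R (-1, y1) \<in> C"
    using C'(1) unfolding affine_def by blast
  then have "(0, y1) \<in> C" by simp
  with C'(2) have "d2 * y1^2 + d1 * y1 + d0 = 0" by auto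
  with on_conic[of y1] \<open>\<alpha> * y1 + \<beta> = 1\<close> show False by simp
qed

lemma isCont_pos_interval:
  fixes f :: "real \<Rightarrow> real"
  assumes "isCont f y0" "0 < f y0"
  shows "\<exists>r>0. \<forall>y\<in>{y0 - r..y0 + r}. 0 < f y"
proof -
  obtain r where r: "r > 0" "\<And>y. y \<noteq> y0 \<Longrightarrow> \<bar>y0 - y\<bar> < r \<Longrightarrow> 0 < f y"
    using LIM_fun_gt_zero[OF assms(1)[unfolded isCont_def] assms(2)] by blast
  have "0 < f y" if "y \<in> {y0 - r/2..y0 + r/2}" for y
    using r that assms(2) by (cases "y = y0") auto
  with r(1) show ?thesis by (intro exI[of _ "r/2"]) auto
qed

lemma quadratic_nonneg_interval_at_root:
  fixes d2 d1 d0 y0 :: real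
  assumes root: "d2 * y0^2 + d1 * y0 + d0 = 0"
    and not_double_neg: "\<not> (d2 < 0 \<and> d1^2 = 4 * d2 * d0)"
  shows "\<exists>a b. a < b \<and> y0 \<in> {a..b} \<and> (\<forall>y\<in>{a..b}. d2 * y^2 + d1 * y + d0 \<ge> 0)"
proof -
  define m where "m = 2 * d2 * y0 + d1"
  have fac: "d2 * y^2 + d1 * y + d0 = (y - y0) * (d2 * (y - y0) + m)" for y
    using root unfolding m_def by (simp add: power2_eq_square algebra_simps)
  consider "m > 0" | "m < 0" | "m = 0" by linarith
  then show ?thesis
  proof cases
    case 1
    have cont: "isCont (\<lambda>y. d2 * (y - y0) + m) y0" by (intro continuous_intros)
    obtain r where r: "r > 0" "\<forall>y\<in>{y0 - r..y0 + r}. 0 < d2 * (y - y0) + m"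
      using isCont_pos_interval[OF cont] 1 by auto
    have "d2 * y^2 + d1 * y + d0 \<ge> 0" if "y \<in> {y0..y0 + r}" for y
    proof -
      have "0 < d2 * (y - y0) + m" "0 \<le> y - y0" using r that by auto
      then show ?thesis unfolding fac by simp
    qed
    with r(1) show ?thesis by (intro exI[of _ y0] exI[of _ "y0 + r"]) auto
  next
    case 2
    have cont: "isCont (\<lambda>y. - (d2 * (y - y0) + m)) y0" by (intro continuous_intros)
    obtain r where r: "r > 0" "\<forall>y\<in>{y0 - r..y0 + r}. 0 < - (d2 * (y - y0) + m)"
      using isCont_pos_interval[OF cont] 2 by auto
    have "d2 * y^2 + d1 * y + d0 \<ge> 0" if "y \<in> {y0 - r..y0}" for y
    proof -
      have "0 < - (d2 * (y - y0) + m)" "y - y0 \<le> 0" using r(2) that r(1) by auto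
      then show ?thesis unfolding fac by (simp add: mult_nonpos_nonpos)
    qed
    with r(1) show ?thesis by (intro exI[of _ "y0 - r"] exI[of _ y0]) auto
  next
    case 3
    have "\<not> d2 < 0"
    proof
      assume "d2 < 0"
      have "d1 = - 2 * d2 * y0" using 3 unfolding m_def by simp
      with root have "d0 = d2 * y0^2" by (simp add: power2_eq_square algebra_simps)
      with \<open>d1 = - 2 * d2 * y0\<close> have "d1^2 = 4 * d2 * d0"
        by (simp add: power2_eq_square algebra_simps)
      with \<open>d2 < 0\<close> not_double_neg show False by simp
    qed
    then show ?thesis
      by (intro exI[of _ y0] exI[of _ "y0 + 1"]) (simp add: fac 3 power2_eq_square[symmetric])
  qed
qed

lemma quadratic_nonneg_interval:
  fixes d2 d1 d0 y0 :: real
  assumes "d2 * y0^2 + d1 * y0 + d0 \<ge> 0" and "\<not> (d2 < 0 \<and> d1^2 = 4 * d2 * d0)"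
  shows "\<exists>a b. a < b \<and> y0 \<in> {a..b} \<and> (\<forall>y\<in>{a..b}. d2 * y^2 + d1 * y + d0 \<ge> 0)"
proof (cases "d2 * y0^2 + d1 * y0 + d0 = 0")
  case True
  then show ?thesis by (rule quadratic_nonneg_interval_at_root) fact
next
  case False
  with assms(1) have pos: "0 < d2 * y0^2 + d1 * y0 + d0" by simp
  have cont: "isCont (\<lambda>y. d2 * y^2 + d1 * y + d0) y0" by (intro continuous_intros)
  obtain r where r: "r > 0" "\<forall>y\<in>{y0 - r..y0 + r}. 0 < d2 * y^2 + d1 * y + d0"
    using isCont_pos_interval[OF cont pos] by blast
  then have "\<forall>y\<in>{y0 - r..y0 + r}. 0 \<le> d2 * y^2 + d1 * y + d0" by (simp add: less_imp_le)
  with r(1) show ?thesis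
    by (intro exI[of _ "y0 - r"] exI[of _ "y0 + r"]) auto
qed

lemma singleton_notin_Vaff_normal_conic:
  assumes "\<not> (d2 < 0 \<and> d1^2 = 4 * d2 * d0)"
  shows "{p} \<notin> Vaff (normal_conic d2 d1 d0)"
proof
  assume "{p} \<in> Vaff (normal_conic d2 d1 d0)"
  then have p: "p \<in> normal_conic d2 d1 d0"
    and max: "\<And>S. connected S \<Longrightarrow> p \<in> S \<Longrightarrow> S \<subseteq> normal_conic d2 d1 d0 \<Longrightarrow> S = {p}"
    by (simp_all add: mem_Vaff_iff)
  obtain u0 y0 where p_eq: "p = (u0, y0)" by (cases p)
  define D where "D y = d2 * y^2 + d1 * y + d0" for y
  have u0: "u0^2 = D y0" using p by (simp add: p_eq D_def)
  then have "D y0 \<ge> 0" by (metis zero_le_power2)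
  then have "\<exists>a b. a < b \<and> y0 \<in> {a..b} \<and> (\<forall>y\<in>{a..b}. D y \<ge> 0)"
    using quadratic_nonneg_interval[of d2 y0 d1 d0] assms by (simp add: D_def)
  then obtain a b where ab: "a < b" "y0 \<in> {a..b}" "\<And>y. y \<in> {a..b} \<Longrightarrow> D y \<ge> 0"
    by blast
  \<comment> \<open>an arc of the conic over [a, b] on the side of u0\<close>
  define \<sigma> :: real where "\<sigma> = (if u0 \<ge> 0 then 1 else -1)"
  let ?S = "(\<lambda>y. (\<sigma> * sqrt (D y), y)) ` {a..b}"
  have "connected ?S"
    unfolding D_def by (intro connected_continuous_image continuous_intros connected_Icc)
  moreover have "p \<in> ?S"
  proof -
    have "\<sigma> * sqrt (D y0) = u0"
      using u0[symmetric] by (simp add: \<sigma>_def real_sqrt_abs)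
    then show ?thesis using ab(2) by (auto simp: p_eq image_iff)
  qed
  moreover have "?S \<subseteq> normal_conic d2 d1 d0"
  proof clarify
    fix y assume "y \<in> {a..b}"
    then have "(\<sigma> * sqrt (D y))^2 = D y"
      using ab(3) by (simp add: \<sigma>_def power_mult_distrib)
    then show "(\<sigma> * sqrt (D y), y) \<in> normal_conic d2 d1 d0" by (simp add: D_def)
  qed
  ultimately have "?S = {p}" by (rule max)
  moreover have "(\<sigma> * sqrt (D a), a) \<in> ?S" "(\<sigma> * sqrt (D b), b) \<in> ?S"
    using ab(1) by auto
  ultimately show False using ab(1) by auto
qed

lemma Vaff_normal_conic_eq_empty:
  assumes not_lines: "\<not> (d2 = 0 \<and> d1 = 0 \<and> d0 \<ge> 0)"
    and not_point: "\<not> (d2 < 0 \<and> d1^2 = 4 * d2 * d0)"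
  shows "Vaff (normal_conic d2 d1 d0) = {}"
proof (rule ccontr)
  assume "Vaff (normal_conic d2 d1 d0) \<noteq> {}"
  then obtain C where C: "C \<in> Vaff (normal_conic d2 d1 d0)" by blast
  then have C': "affine C" "C \<noteq> {}" "C \<subseteq> normal_conic d2 d1 d0"
    by (simp_all add: mem_Vaff_iff)
  then obtain p where "p \<in> C" by blast
  show False
  proof (cases "C = {p}")
    case True
    with C singleton_notin_Vaff_normal_conic[OF not_point] show False by simp
  next
    case False
    with \<open>p \<in> C\<close> obtain q where "q \<in> C" "q \<noteq> p" by blast
    then obtain \<alpha> \<beta> where graph: "\<And>y. (\<alpha> * y + \<beta>, y) \<in> C"
      using affine_subset_normal_conic_contains_graph[OF C'(1,3) \<open>p \<in> C\<close>] by metis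
    have "\<alpha> = 0" by (rule graph_in_Vaff_normal_conic_constant[OF C graph])
    have "(\<alpha> * y + \<beta>)^2 = d2 * y^2 + d1 * y + d0" for y
      using graph[of y] C'(3) by auto
    from square_linear_eq_quadratic_coeffs[OF this] \<open>\<alpha> = 0\<close> have "d2 = 0" "d1 = 0" "d0 \<ge> 0"
      by simp_all
    with not_lines show False by simp
  qed
qed

definition normal_conic_out :: "real \<Rightarrow> real \<Rightarrow> real \<Rightarrow> alg_output" where
  "normal_conic_out d2 d1 d0 =
    (if d2 = 0 \<and> d1 = 0 then
       (if d0 = 0 then [((0, 0), [(0, 1)])]
        else if d0 > 0 then [((sqrt d0, 0), [(0, 1)]), ((- sqrt d0, 0), [(0, 1)])]
        else [])
     else if d2 < 0 \<and> d1^2 = 4 * d2 * d0 then [((0, - d1 / (2 * d2)), [])]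
     else [])"

lemma normal_conic_double_root:
  assumes "d2 < 0" "d1^2 = 4 * d2 * d0"
  shows "normal_conic d2 d1 d0 = {(0, - d1 / (2 * d2))}"
proof -
  define y0 where "y0 = - d1 / (2 * d2)"
  have square: "d2 * y^2 + d1 * y + d0 = d2 * (y - y0)^2" for y
    using assms by (simp add: y0_def field_simps power2_eq_square)
  have "(u, y) \<in> normal_conic d2 d1 d0 \<longleftrightarrow> (u, y) = (0, y0)" for u y
  proof
    assume "(u, y) \<in> normal_conic d2 d1 d0"
    then have "u^2 = d2 * (y - y0)^2" by (simp add: square)
    moreover have "d2 * (y - y0)^2 \<le> 0"
      using assms(1) by (simp add: mult_nonpos_nonneg)
    ultimately have "u^2 = 0" "d2 * (y - y0)^2 = 0"
      by (metis antisym zero_le_power2)+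
    then show "(u, y) = (0, y0)" using assms(1) by simp
  qed (simp add: square)
  then have "p \<in> normal_conic d2 d1 d0 \<longleftrightarrow> p \<in> {(0, y0)}" for p
    by (cases p) (simp del: mem_normal_conic)
  then show ?thesis unfolding y0_def by blast
qed

lemma Vaff_normal_conic: "Vaff (normal_conic d2 d1 d0) = out_set (normal_conic_out d2 d1 d0)"
proof -
  consider "d2 = 0" "d1 = 0" "d0 = 0" | "d2 = 0" "d1 = 0" "d0 > 0"
    | "d2 < 0" "d1^2 = 4 * d2 * d0"
    | "\<not> (d2 = 0 \<and> d1 = 0 \<and> d0 \<ge> 0)" "\<not> (d2 < 0 \<and> d1^2 = 4 * d2 * d0)"
    by fastforce
  then show ?thesis
  proof cases
    case 1
    then have "normal_conic d2 d1 d0 = flat (0, 0) [(0, 1)]"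
      by (auto simp: flat_vertical normal_conic_def)
    with 1 show ?thesis by (simp add: Vaff_flat normal_conic_out_def)
  next
    case 2
    then have "normal_conic d2 d1 d0 = flat (sqrt d0, 0) [(0, 1)] \<union> flat (- sqrt d0, 0) [(0, 1)]"
      by (auto simp: flat_vertical normal_conic_def power2_eq_iff)
    moreover have "flat (sqrt d0, 0) [(0, 1)] \<inter> flat (- sqrt d0, 0) [(0, 1::real)] = {}"
      using 2 by (auto simp: flat_vertical)
    ultimately show ?thesis
      using 2 by (simp add: Vaff_Un_disjoint_affine affine_flat flat_nonempty normal_conic_out_def)
  next
    case 3
    then show ?thesis
      by (simp add: normal_conic_double_root Vaff_affine normal_conic_out_def)
  next
    case 4
    then have "normal_conic_out d2 d1 d0 = []"
      by (auto simp: normal_conic_out_def)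
    with 4 show ?thesis
      by (simp add: Vaff_normal_conic_eq_empty)
  qed
qed

section \<open>Reduction of a conic to the normal form\<close>

definition conic :: "real \<Rightarrow> real \<Rightarrow> real \<Rightarrow> real \<Rightarrow> real \<Rightarrow> real \<Rightarrow> (real \<times> real) set" where
  "conic a b0 b1 c0 c1 c2 = {(x, y). a * x^2 + (b0 + b1 * y) * x + (c0 + c1 * y + c2 * y^2) = 0}"

lemma poly_eq_sum_upto:
  fixes p :: "'a::comm_semiring_1 poly"
  assumes "degree p \<le> n"
  shows "poly p x = (\<Sum>i\<le>n. coeff p i * x ^ i)"
proof -
  have "poly p x = (\<Sum>i\<le>degree p. coeff p i * x ^ i)" by (rule poly_altdef)
  also have "\<dots> = (\<Sum>i\<le>n. coeff p i * x ^ i)"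
    by (rule sum.mono_neutral_left) (use assms in \<open>auto simp: coeff_eq_0\<close>)
  finally show ?thesis .
qed

lemma zero_set_eq_conic:
  assumes "degree f0 \<le> 0" "degree f1 \<le> 1" "degree f2 \<le> 2"
  shows "zero_set f0 f1 f2 =
    conic (coeff f0 0) (coeff f1 0) (coeff f1 1) (coeff f2 0) (coeff f2 1) (coeff f2 2)"
proof -
  have "poly f0 y = coeff f0 0" "poly f1 y = coeff f1 0 + coeff f1 1 * y"
    "poly f2 y = coeff f2 0 + coeff f2 1 * y + coeff f2 2 * y^2" for y
    using poly_eq_sum_upto[OF assms(1)] poly_eq_sum_upto[OF assms(2)] poly_eq_sum_upto[OF assms(3)]
    by (simp_all add: numeral_2_eq_2)
  then show ?thesis
    unfolding zero_set_def conic_def quad_eval_def by (intro Collect_cong) (simp split: prod.split)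
qed

lemma conic_eq_image_normal_conic:
  assumes a: "a \<noteq> 0"
  shows "conic a b0 b1 c0 c1 c2 = (\<lambda>(u, y). ((u - b1 * y - b0) / (2 * a), y)) `
    normal_conic (b1^2 - 4 * a * c2) (2 * b0 * b1 - 4 * a * c1) (b0^2 - 4 * a * c0)"
    (is "_ = ?g ` ?N")
proof -
  have square: "4 * a * (a * x^2 + (b0 + b1 * y) * x + (c0 + c1 * y + c2 * y^2)) =
     (2 * a * x + b1 * y + b0)^2 -
     ((b1^2 - 4 * a * c2) * y^2 + (2 * b0 * b1 - 4 * a * c1) * y + (b0^2 - 4 * a * c0))" for x y
    by (simp add: power2_eq_square algebra_simps)
  have equiv: "(x, y) \<in> conic a b0 b1 c0 c1 c2 \<longleftrightarrow> (2 * a * x + b1 * y + b0, y) \<in> ?N" for x y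
  proof -
    have "(x, y) \<in> conic a b0 b1 c0 c1 c2 \<longleftrightarrow>
        4 * a * (a * x^2 + (b0 + b1 * y) * x + (c0 + c1 * y + c2 * y^2)) = 0"
      using a by (simp add: conic_def)
    then show ?thesis unfolding square by simp
  qed
  show ?thesis
  proof (intro set_eqI iffI)
    fix p assume "p \<in> conic a b0 b1 c0 c1 c2"
    moreover obtain x y where p: "p = (x, y)" by (cases p)
    ultimately have "(2 * a * x + b1 * y + b0, y) \<in> ?N" using equiv by simp
    moreover have "p = ?g (2 * a * x + b1 * y + b0, y)" using a by (simp add: p)
    ultimately show "p \<in> ?g ` ?N" by (rule rev_image_eqI)
  next
    fix p assume "p \<in> ?g ` ?N"
    then obtain u y where uy: "(u, y) \<in> ?N" "p = ?g (u, y)" by auto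
    have "2 * a * ((u - b1 * y - b0) / (2 * a)) + b1 * y + b0 = u" using a by simp
    with uy show "p \<in> conic a b0 b1 c0 c1 c2" using equiv by simp
  qed
qed

definition conic_out :: "real \<Rightarrow> real \<Rightarrow> real \<Rightarrow> real \<Rightarrow> real \<Rightarrow> real \<Rightarrow> alg_output" where
  "conic_out a b0 b1 c0 c1 c2 =
     map_out (\<lambda>(u, y). ((u - b1 * y - b0) / (2 * a), y)) (\<lambda>(u, y). ((u - b1 * y) / (2 * a), y))
       (normal_conic_out (b1^2 - 4 * a * c2) (2 * b0 * b1 - 4 * a * c1) (b0^2 - 4 * a * c0))"

lemma Vaff_conic:
  assumes "a \<noteq> 0"
  shows "Vaff (conic a b0 b1 c0 c1 c2) = out_set (conic_out a b0 b1 c0 c1 c2)"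
proof -
  let ?l = "\<lambda>(u, y). ((u - b1 * y) / (2 * a), y)"
  have "linear ?l"
    by (rule linearI)
      (simp_all add: case_prod_beta diff_divide_distrib add_divide_distrib algebra_simps)
  moreover have "inj ?l"
    using assms by (auto simp: inj_on_def divide_cancel_right)
  moreover have "(\<lambda>(u, y). ((u - b1 * y - b0) / (2 * a), y)) x = ?l x + (- b0 / (2 * a), 0)" for x
    by (cases x) (simp add: diff_divide_distrib)
  ultimately show ?thesis
    unfolding conic_eq_image_normal_conic[OF assms] conic_out_def
    by (rule Vaff_affine_bijection_image_out) (rule Vaff_normal_conic)
qed

lemma conic_eq_swap_image: "conic 0 b0 b1 c0 c1 c2 = prod.swap ` conic c2 c1 b1 c0 b0 0"
proof -
  have "(x, y) \<in> conic 0 b0 b1 c0 c1 c2 \<longleftrightarrow> (y, x) \<in> conic c2 c1 b1 c0 b0 0" for x y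
    by (simp add: conic_def algebra_simps)
  then have "p \<in> conic 0 b0 b1 c0 c1 c2 \<longleftrightarrow> prod.swap p \<in> conic c2 c1 b1 c0 b0 0" for p
    by (cases p) simp
  then show ?thesis
    using image_eqI[of _ prod.swap] by (auto simp del: prod.swap_def)
qed

lemma linear_swap: "linear (prod.swap :: real \<times> real \<Rightarrow> real \<times> real)"
  by (rule linearI) (auto simp: prod.swap_def)

lemma Vaff_conic_swap:
  "Vaff (conic 0 b0 b1 c0 c1 c2) = (`) prod.swap ` Vaff (conic c2 c1 b1 c0 b0 0)"
  using Vaff_affine_bijection_image[OF linear_swap, of 0 "conic c2 c1 b1 c0 b0 0"]
  by (simp add: conic_eq_swap_image)

lemma conic_eq_shear_image:
  "conic 0 b0 b1 c0 c1 0 = (\<lambda>(x, y). (x, y + x)) ` conic b1 (b0 + c1) b1 c0 c1 0"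
proof -
  let ?s = "\<lambda>(x::real, y::real). (x, y + x)" and ?s' = "\<lambda>(x::real, y::real). (x, y - x)"
  have shear: "0 * x^2 + (b0 + b1 * y) * x + (c0 + c1 * y + 0 * y^2) =
      b1 * x^2 + ((b0 + c1) + b1 * (y - x)) * x + (c0 + c1 * (y - x) + 0 * (y - x)^2)"
    for x y :: real
    by (simp add: power2_eq_square algebra_simps)
  have "(x, y) \<in> conic 0 b0 b1 c0 c1 0 \<longleftrightarrow> ?s' (x, y) \<in> conic b1 (b0 + c1) b1 c0 c1 0" for x y
    unfolding conic_def mem_Collect_eq case_prod_conv by (simp only: shear)
  then have equiv: "p \<in> conic 0 b0 b1 c0 c1 0 \<longleftrightarrow> ?s' p \<in> conic b1 (b0 + c1) b1 c0 c1 0" for p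
    by (cases p) simp
  have inv: "?s (?s' p) = p" "?s' (?s p) = p" for p
    by (simp_all add: case_prod_beta)
  show ?thesis
  proof (intro set_eqI iffI)
    fix p assume "p \<in> conic 0 b0 b1 c0 c1 0"
    then have "?s' p \<in> conic b1 (b0 + c1) b1 c0 c1 0" by (simp only: equiv)
    then show "p \<in> ?s ` conic b1 (b0 + c1) b1 c0 c1 0"
      by (rule rev_image_eqI) (simp only: inv)
  next
    fix p assume "p \<in> ?s ` conic b1 (b0 + c1) b1 c0 c1 0"
    then obtain q where "q \<in> conic b1 (b0 + c1) b1 c0 c1 0" "p = ?s q" by blast
    then show "p \<in> conic 0 b0 b1 c0 c1 0" by (simp only: equiv inv)
  qed
qed

lemma Vaff_conic_hyperbola:
  assumes "b1 \<noteq> 0"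
  shows "Vaff (conic 0 b0 b1 c0 c1 0) = {}"
proof -
  let ?s = "\<lambda>(x, y). (x, y + x) :: real \<times> real"
  have "linear ?s"
    by (rule linearI) (simp_all add: case_prod_beta algebra_simps)
  moreover have "inj ?s"
    by (auto simp: inj_on_def)
  moreover have "conic_out b1 (b0 + c1) b1 c0 c1 0 = []"
    using assms by (simp add: conic_out_def normal_conic_out_def map_out_def)
  ultimately show ?thesis
    using Vaff_affine_bijection_image[of ?s 0 "conic b1 (b0 + c1) b1 c0 c1 0"] Vaff_conic[OF assms]
    by (simp add: conic_eq_shear_image)
qed

lemma line_eq_flat:
  fixes b0 c1 c0 :: real
  assumes "b0 \<noteq> 0"
  shows "{(x, y). b0 * x + c1 * y + c0 = 0} = flat (- c0 / b0, 0) [(- c1 / b0, 1)]"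
proof -
  have "(x, y) \<in> flat (- c0 / b0, 0) [(- c1 / b0, 1)] \<longleftrightarrow> b0 * x + c1 * y + c0 = 0" for x y
  proof -
    have "(x, y) \<in> flat (- c0 / b0, 0) [(- c1 / b0, 1)] \<longleftrightarrow> x = - c0 / b0 + y * (- c1 / b0)"
      by (auto simp: flat_single image_iff real_scaleR_def)
    also have "\<dots> \<longleftrightarrow> b0 * x + c1 * y + c0 = 0"
      using assms by (auto simp: field_simps)
    finally show ?thesis .
  qed
  then show ?thesis by (simp add: set_eq_iff split_paired_All)
qed

lemma horizontal_line_eq_flat:
  fixes c1 c0 :: real
  assumes "c1 \<noteq> 0"
  shows "{(x::real, y). c1 * y + c0 = 0} = flat (0, - c0 / c1) [(1, 0)]"
proof -
  have "(x, y) \<in> flat (0, - c0 / c1) [(1, 0)] \<longleftrightarrow> c1 * y + c0 = 0" for x y :: real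
  proof -
    have "(x, y) \<in> flat (0, - c0 / c1) [(1, 0)] \<longleftrightarrow> y = - c0 / c1"
      by (auto simp: flat_single image_iff real_scaleR_def)
    also have "\<dots> \<longleftrightarrow> c1 * y + c0 = 0"
      using assms by (auto simp: field_simps)
    finally show ?thesis .
  qed
  then show ?thesis by (simp add: set_eq_iff split_paired_All)
qed

lemma flat_plane: "flat (0, 0) [(1, 0), (0, 1)] = (UNIV :: (real \<times> real) set)"
proof -
  have "(x, y) \<in> flat (0, 0) [(1, 0), (0, 1)]" for x y :: real
  proof -
    have "(x, y) = x *\<^sub>R (1, 0) + y *\<^sub>R (0, 1)" by simp
    also have "\<dots> \<in> span {(1, 0), (0, 1)}"
      by (intro span_add span_scale span_base) auto
    finally show ?thesis by (simp add: flat_def zero_prod_def[symmetric])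
  qed
  then show ?thesis by auto
qed

definition line_out :: "real \<Rightarrow> real \<Rightarrow> real \<Rightarrow> alg_output" where
  "line_out b0 c1 c0 =
    (if b0 \<noteq> 0 then [((- c0 / b0, 0), [(- c1 / b0, 1)])]
     else if c1 \<noteq> 0 then [((0, - c0 / c1), [(1, 0)])]
     else if c0 = 0 then [((0, 0), [(1, 0), (0, 1)])]
     else [])"

lemma Vaff_conic_line: "Vaff (conic 0 b0 0 c0 c1 0) = out_set (line_out b0 c1 c0)"
proof -
  have conic_eq: "conic 0 b0 0 c0 c1 0 = {(x, y). b0 * x + c1 * y + c0 = 0}"
    by (simp add: conic_def algebra_simps)
  consider "b0 \<noteq> 0" | "b0 = 0" "c1 \<noteq> 0" | "b0 = 0" "c1 = 0" "c0 = 0" | "b0 = 0" "c1 = 0" "c0 \<noteq> 0"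
    by blast
  then show ?thesis
  proof cases
    case 1
    then have "conic 0 b0 0 c0 c1 0 = flat (- c0 / b0, 0) [(- c1 / b0, 1)]"
      by (simp add: conic_eq line_eq_flat)
    with 1 show ?thesis by (simp add: Vaff_flat line_out_def)
  next
    case 2
    have "conic 0 b0 0 c0 c1 0 = {(x, y). c1 * y + c0 = 0}"
      unfolding conic_eq using 2 by simp
    also have "\<dots> = flat (0, - c0 / c1) [(1, 0)]"
      using 2 by (intro horizontal_line_eq_flat) simp
    finally show ?thesis using 2 by (simp add: Vaff_flat line_out_def)
  next
    case 3
    then have "conic 0 b0 0 c0 c1 0 = flat (0, 0) [(1, 0), (0, 1)]"
      by (simp add: conic_def flat_plane)
    with 3 show ?thesis by (simp add: Vaff_flat line_out_def)
  next
    case 4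
    then have "conic 0 b0 0 c0 c1 0 = {}" by (simp add: conic_def)
    with 4 show ?thesis by (simp add: line_out_def)
  qed
qed

section \<open>The algorithm and its correctness\<close>

lemma reg_append: "reg (s @ t) i = (if i < length s then reg s i else reg t (i - length s))"
  by (auto simp: reg_def nth_append)

lemma reg_Cons: "reg (x # xs) n = (if n = 0 then x else reg xs (n - 1))"
  by (cases n) (simp_all add: reg_def)

lemma reg_Nil: "reg [] n = 0"
  by (simp add: reg_def)

definition orient :: "bool \<Rightarrow> alg_output \<Rightarrow> alg_output" where
  "orient sw out = (if sw then map_out prod.swap prod.swap out else out)"

definition ret_oriented :: "bool \<Rightarrow> ((nat \<times> nat) \<times> (nat \<times> nat) list) list \<Rightarrow> prog" where
  "ret_oriented sw out =
     Ret (if sw then map (\<lambda>(p, ds). (prod.swap p, map prod.swap ds)) out else out)"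

text \<open>Registers 6 to 28 of conic_prog hold 4, 4a, b1 b1, 4a c2, -4a c2, d2, b0 b1, 2 b0 b1, 4a c1,
  -4a c1, d1, b0 b0, 4a c0, -4a c0, d0, 2a, 1/(2a), -b0, -b0/(2a), -b1, -b1/(2a), 0, 1, where
  d2 = b1^2 - 4 a c2, d1 = 2 b0 b1 - 4 a c1, d0 = b0^2 - 4 a c0; the inputs a, b0, b1, c0, c1, c2
  are read from the registers given as arguments. two_lines_prog obtains - sqrt d0 and sqrt d0 as
  the real roots of X^2 - d0 (registers 31 and 32); point_prog tests d2 < 0 and d1^2 = 4 d2 d0 and
  computes y0 = - d1 / (2 d2) in register 38. With sw set, all outputs have their coordinates
  exchanged.\<close>

definition two_lines_prog :: "bool \<Rightarrow> prog" where
  "two_lines_prog sw =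
    Neg 20 (Roots [29, 27, 28] (Mul 32 22 (Add 33 24 (Mul 31 22 (Add 35 24
      (ret_oriented sw [((34, 27), [(26, 28)]), ((36, 27), [(26, 28)])]))))))"

definition point_prog :: "bool \<Rightarrow> prog" where
  "point_prog sw =
    Mul 16 16 (Mul 6 11 (Mul 30 20 (Neg 31 (Add 29 32 (Neg 11
      (IfPos 34
        (IfZero 33 (Add 11 11 (Inv 35 (Neg 16 (Mul 37 36 (Mul 26 38 (Add 24 39
           (ret_oriented sw [((40, 38), [])])))))))
          (Ret []))
        (Ret [])))))))"

definition conic_prog :: "nat \<Rightarrow> nat \<Rightarrow> nat \<Rightarrow> nat \<Rightarrow> nat \<Rightarrow> nat \<Rightarrow> bool \<Rightarrow> prog" where
  "conic_prog ia ib0 ib1 ic0 ic1 ic2 sw =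
    Const 4 (Mul 6 ia (Mul ib1 ib1 (Mul 7 ic2 (Neg 9 (Add 8 10
    (Mul ib0 ib1 (Add 12 12 (Mul 7 ic1 (Neg 14 (Add 13 15
    (Mul ib0 ib0 (Mul 7 ic0 (Neg 18 (Add 17 19
    (Add ia ia (Inv 21 (Neg ib0 (Mul 23 22 (Neg ib1 (Mul 25 22 (Const 0 (Const 1
    (IfZero 11
      (IfZero 16
        (IfZero 20 (ret_oriented sw [((24, 27), [(26, 28)])])
          (IfPos 20 (two_lines_prog sw) (Ret [])))
        (point_prog sw))
      (point_prog sw))))))))))))))))))))))))"

lemma real_roots_sorted_square_minus:
  fixes m :: real
  assumes "m < 0"
  shows "real_roots_sorted [:m, 0, 1:] = [- sqrt (- m), sqrt (- m)]"
proof -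
  have "{x. poly [:m, 0, 1:] x = 0} = {x. x^2 = (sqrt (- m))^2}"
    using assms by (simp add: power2_eq_square, intro Collect_cong, linarith)
  also have "\<dots> = set [- sqrt (- m), sqrt (- m)]"
    by (auto simp: power2_eq_iff)
  finally show ?thesis
    unfolding real_roots_sorted_def
    by (simp add: sorted_list_of_set.idem_if_sorted_distinct) (use assms in auto)
qed

lemma exec_conic_prog:
  assumes s: "length s = 6" and idx: "ia < 6" "ib0 < 6" "ib1 < 6" "ic0 < 6" "ic1 < 6" "ic2 < 6"
    and val: "reg s ia = a" "reg s ib0 = b0" "reg s ib1 = b1" "reg s ic0 = c0" "reg s ic1 = c1"
      "reg s ic2 = c2"
    and a: "a \<noteq> 0"
  shows "exec (conic_prog ia ib0 ib1 ic0 ic1 ic2 sw) s =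
    Some (orient sw (conic_out a b0 b1 c0 c1 c2))"
proof -
  define d2 d1 d0 where "d2 = b1^2 - 4 * a * c2" and "d1 = 2 * b0 * b1 - 4 * a * c1"
    and "d0 = b0^2 - 4 * a * c0"
  \<comment> \<open>the discriminants, and below the case conditions, in the form in which the program
    computes them, so that simp decides the program's tests\<close>
  have d_prog: "d2 = b1 * b1 - 4 * a * c2" "d1 = b0 * b1 + b0 * b1 - 4 * a * c1"
    "d0 = b0 * b0 - 4 * a * c0"
    by (simp_all add: d2_def d1_def d0_def power2_eq_square)
  have out: "conic_out a b0 b1 c0 c1 c2 = map_out (\<lambda>(u, y). ((u - b1 * y - b0) / (2 * a), y))
      (\<lambda>(u, y). ((u - b1 * y) / (2 * a), y)) (normal_conic_out d2 d1 d0)"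
    by (simp add: conic_out_def d2_def d1_def d0_def)
  have reg_s_append: "reg (s @ t) i = (if i < 6 then reg s i else reg t (i - 6))" for t i
    using s by (simp add: reg_append)
  note simps = conic_prog_def two_lines_prog_def point_prog_def ret_oriented_def orient_def
    reg_s_append reg_Cons reg_Nil idx val out map_out_def normal_conic_out_def d_prog
  consider "d2 = 0" "d1 = 0" "d0 = 0" | "d2 = 0" "d1 = 0" "d0 > 0" | "d2 = 0" "d1 = 0" "d0 < 0"
    | "\<not> (d2 = 0 \<and> d1 = 0)" "d2 < 0" "d1^2 = 4 * d2 * d0" "d1 * d1 - 4 * d2 * d0 = 0"
    | "\<not> (d2 = 0 \<and> d1 = 0)" "\<not> (d2 < 0 \<and> d1^2 = 4 * d2 * d0)"
      "d2 < 0 \<Longrightarrow> d1 * d1 - 4 * d2 * d0 \<noteq> 0"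
    by (fastforce simp: power2_eq_square)
  then show ?thesis
  proof cases
    case 1
    with a show ?thesis
      by (cases sw; simp add: simps; simp add: field_simps)
  next
    case 2
    moreover have "real_roots_sorted [:- d0, 0, 1:] = [- sqrt d0, sqrt d0]"
      using real_roots_sorted_square_minus[of "- d0"] 2 by simp
    ultimately show ?thesis
      using a by (cases sw; simp add: simps Let_def; simp add: field_simps)
  next
    case 3
    with a show ?thesis
      by (cases sw) (simp_all add: simps)
  next
    case 4
    with a show ?thesis
      by (cases sw; simp add: simps; simp add: field_simps)
  next
    case 5
    with a show ?thesis
      by (cases sw) (simp_all add: simps)
  qed
qed

definition line_prog :: prog where
  "line_prog =
    IfZero 2
      (IfZero 1
        (IfZero 4
          (IfZero 3 (Const 0 (Const 1 (Ret [((6, 6), [(7, 6), (6, 7)])]))) (Ret []))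
          (Inv 4 (Neg 3 (Mul 7 6 (Const 0 (Const 1 (Ret [((9, 8), [(10, 9)])])))))))
        (Inv 1 (Neg 3 (Mul 7 6 (Neg 4 (Mul 9 6 (Const 0 (Const 1
          (Ret [((8, 11), [(10, 12)])])))))))))
      (Ret [])"

lemma exec_line_prog:
  "exec line_prog [0, b0, b1, c0, c1, 0] = Some (if b1 = 0 then line_out b0 c1 c0 else [])"
  by (simp add: line_prog_def line_out_def reg_def)

text \<open>For a = 0 \<noteq> c2, register 0 supplies the coefficient 0 of the exchanged conic
  conic c2 c1 b1 c0 b0 0.\<close>

definition main_prog :: prog where
  "main_prog =
    IfZero 0 (IfZero 5 line_prog (conic_prog 5 4 2 3 1 0 True)) (conic_prog 0 1 2 3 4 5 False)"

lemma main_prog_correct: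
  "\<exists>out. exec main_prog [a, b0, b1, c0, c1, c2] = Some out \<and>
     out_set out = Vaff (conic a b0 b1 c0 c1 c2)"
proof -
  consider "a \<noteq> 0" | "a = 0" "c2 \<noteq> 0" | "a = 0" "c2 = 0" by blast
  then show ?thesis
  proof cases
    case 1
    then have "exec main_prog [a, b0, b1, c0, c1, c2] = Some (conic_out a b0 b1 c0 c1 c2)"
      using exec_conic_prog[of "[a, b0, b1, c0, c1, c2]" 0 1 2 3 4 5 a b0 b1 c0 c1 c2 False]
      by (simp add: main_prog_def reg_def orient_def)
    with 1 show ?thesis by (simp add: Vaff_conic)
  next
    case 2
    then have "exec main_prog [a, b0, b1, c0, c1, c2] =
        Some (map_out prod.swap prod.swap (conic_out c2 c1 b1 c0 b0 0))"
      using exec_conic_prog[of "[a, b0, b1, c0, c1, c2]" 5 4 2 3 1 0 c2 c1 b1 c0 b0 0 True]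
      by (simp add: main_prog_def reg_def orient_def)
    moreover have "out_set (map_out prod.swap prod.swap out) = (`) prod.swap ` out_set out" for out
      using out_set_map_out[OF linear_swap, of prod.swap 0] by simp
    ultimately show ?thesis
      using 2 by (simp add: Vaff_conic Vaff_conic_swap)
  next
    case 3
    then show ?thesis
      by (simp add: main_prog_def exec_line_prog reg_def Vaff_conic_line Vaff_conic_hyperbola)
  qed
qed

theorem lemma4p9:
  shows "\<exists>P :: prog. \<forall>f0 f1 f2 :: real poly.
           degree f0 \<le> 0 \<longrightarrow> degree f1 \<le> 1 \<longrightarrow> degree f2 \<le> 2 \<longrightarrow>
           (\<exists>out. exec P (input_regs f0 f1 f2) = Some out \<and>
                  out_set out = Vaff (zero_set f0 f1 f2))"
proof (intro exI[of _ main_prog] allI impI)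
  fix f0 f1 f2 :: "real poly"
  assume "degree f0 \<le> 0" "degree f1 \<le> 1" "degree f2 \<le> 2"
  then show "\<exists>out. exec main_prog (input_regs f0 f1 f2) = Some out \<and>
      out_set out = Vaff (zero_set f0 f1 f2)"
    by (simp add: input_regs_def zero_set_eq_conic main_prog_correct)
qed

end
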